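(* Let $H$ be the Hamiltonian defined on the interval $[0,1]$ a.e. by \[ H(t):= \begin{cases} \begin{pmatrix}1&0\\0&0\end{pmatrix} & \text{if } e^{-(2n+1)} < t \le e^{-2n}, \\[1.5ex] \begin{pmatrix}0&0\\0&1\end{pmatrix} & \text{if } e^{-(2n+2)} < t \le e^{-(2n+1)} \end{cases} \qquad\text{for }n\in\mathbb{N}_0. \] Let $\kappa_H(r)$ and $K_H(t;r)$ be defined as below with $c=1$. Then \[ \kappa_H(r) \asymp \log r, \qquad \int_0^1 K_H(t;r)\,\mathrm{d}t \asymp (\log r)^2, \] for $r>r_0=\frac{1}{\sqrt{\det\Omega(0,1)}}$.
   Context: Write $H=\begin{pmatrix}h_1&h_3\\ h_3&h_2\end{pmatrix}$, $\Omega(s,t)=\int_s^tH(u)\,\mathrm{d}u$, $\omega_j(s,t)=\int_s^th_j$. With $c=1$: $(\hat t,\hat s)$ is the unique pair with $\det\Omega(0,\hat t(r))=\frac{1}{r^2}$ for $r>r_0$ and $\hat s(t;r)\le t$, $\det\Omega(\hat s(t;r),t)=\frac{1}{r^2}$ for $t\ge\hat t(r)$; $K_H(t;r):=\mathbf{1}_{[0,\hat t(r))}(t)\frac{\omega_2(0,t)h_1(t)}{\frac{1}{r^2}+(\omega_3(0,t))^2}+\mathbf{1}_{[\hat t(r),1)}(t)\frac{h_1(t)}{\omega_1(\hat s(t;r),t)}$. $\kappa_H(r)$ is produced by the algorithm: $\sigma_0^{(r)}:=0$; if $\det\Omega(\sigma_{j-1}^{(r)},1)>\frac{1}{r^2}$,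 let $\sigma_j^{(r)}\in(\sigma_{j-1}^{(r)},1)$ be the unique point with $\det\Omega(\sigma_{j-1}^{(r)},\sigma_j^{(r)})=\frac{1}{r^2}$; otherwise set $\sigma_j^{(r)}:=1$, $\kappa_H(r):=j$ and stop. $f\asymp g$ means $c_1g\le f\le c_2g$ for constants $c_1,c_2>0$ (here for sufficiently large $r$). *)

theory Defs
  imports "HOL-Analysis.Analysis"
begin

text \<open>A Hamiltonian H = ((h1,h3),(h3,h2)) is given by its three entry functions
  (real-valued, taken as 0 outside the base interval).\<close>

definition omega :: "(real \<Rightarrow> real) \<Rightarrow> real \<Rightarrow> real \<Rightarrow> real" where
  "omega h s t = integral {s..t} h"

definition detOmega ::
  "(real \<Rightarrow> real) \<Rightarrow> (real \<Rightarrow> real) \<Rightarrow> (real \<Rightarrow> real) \<Rightarrow> real \<Rightarrow> real \<Rightarrow> real" where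
  "detOmega h1 h2 h3 s t = omega h1 s t * omega h2 s t - (omega h3 s t)\<^sup>2"

definition rzero :: "(real \<Rightarrow> real) \<Rightarrow> (real \<Rightarrow> real) \<Rightarrow> (real \<Rightarrow> real) \<Rightarrow> real" where
  "rzero h1 h2 h3 = 1 / sqrt (detOmega h1 h2 h3 0 1)"

definition that :: "(real \<Rightarrow> real) \<Rightarrow> (real \<Rightarrow> real) \<Rightarrow> (real \<Rightarrow> real) \<Rightarrow> real \<Rightarrow> real" where
  "that h1 h2 h3 r = (THE t. 0 \<le> t \<and> t \<le> 1 \<and> detOmega h1 h2 h3 0 t = 1 / r\<^sup>2)"

definition shat :: "(real \<Rightarrow> real) \<Rightarrow> (real \<Rightarrow> real) \<Rightarrow> (real \<Rightarrow> real) \<Rightarrow> real \<Rightarrow> real \<Rightarrow> real" where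
  "shat h1 h2 h3 t r = (THE s. 0 \<le> s \<and> s \<le> t \<and> detOmega h1 h2 h3 s t = 1 / r\<^sup>2)"

definition KH :: "(real \<Rightarrow> real) \<Rightarrow> (real \<Rightarrow> real) \<Rightarrow> (real \<Rightarrow> real) \<Rightarrow> real \<Rightarrow> real \<Rightarrow> real" where
  "KH h1 h2 h3 t r =
     (if 0 \<le> t \<and> t < that h1 h2 h3 r then
        omega h2 0 t * h1 t / (1 / r\<^sup>2 + (omega h3 0 t)\<^sup>2)
      else if that h1 h2 h3 r \<le> t \<and> t < 1 then
        h1 t / omega h1 (shat h1 h2 h3 t r) t
      else 0)"

primrec sigma ::
  "(real \<Rightarrow> real) \<Rightarrow> (real \<Rightarrow> real) \<Rightarrow> (real \<Rightarrow> real) \<Rightarrow> real \<Rightarrow> nat \<Rightarrow> real" where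
  "sigma h1 h2 h3 r 0 = 0"
| "sigma h1 h2 h3 r (Suc j) =
     (if detOmega h1 h2 h3 (sigma h1 h2 h3 r j) 1 > 1 / r\<^sup>2
      then (THE s. sigma h1 h2 h3 r j < s \<and> s < 1 \<and>
                   detOmega h1 h2 h3 (sigma h1 h2 h3 r j) s = 1 / r\<^sup>2)
      else 1)"

definition kappa :: "(real \<Rightarrow> real) \<Rightarrow> (real \<Rightarrow> real) \<Rightarrow> (real \<Rightarrow> real) \<Rightarrow> real \<Rightarrow> nat" where
  "kappa h1 h2 h3 r = (LEAST j. 0 < j \<and> sigma h1 h2 h3 r j = 1)"

definition hA :: "real \<Rightarrow> real" where
  "hA t = (if \<exists>n::nat. exp (-(2 * real n + 1)) < t \<and> t \<le> exp (-(2 * real n)) then 1 else 0)"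

definition hB :: "real \<Rightarrow> real" where
  "hB t = (if \<exists>n::nat. exp (-(2 * real n + 2)) < t \<and> t \<le> exp (-(2 * real n + 1)) then 1 else 0)"

definition hC :: "real \<Rightarrow> real" where
  "hC t = 0"

end

theory Submission
  imports Defs
begin

text \<open>The Hamiltonian alternates between the two coordinate directions on the intervals
  (exp (-m-1), exp (-m)]; call m the level of the points of such an interval. det Omega vanishes
  on an interval inside one level and is of the order of its squared length on an interval
  containing a full level of each kind. Since hat t(r) is of order 1/r, the points sigma_j start at
  level about log r, and each step of the algorithm lowers the level by one or two, so kappa(r) is
  of order log r. Right of hat t(r), on an even level starting at a, the kernel is essentially
  min (r^2, 1/(t - a)), whose integral over the level is of order log r; there are about
  (log r)/2 such levels, which gives the order (log r)^2 of the integral.\<close>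

section \<open>Integrals of shifted reciprocals\<close>

lemma has_integral_inverse_shift:
  fixes a p q :: real
  assumes "0 < p" "p \<le> q"
  shows "((\<lambda>t. 1 / (t - a)) has_integral (ln q - ln p)) {a + p..a + q}"
proof -
  have "((\<lambda>t. 1 / (t - a)) has_integral (ln ((a + q) - a) - ln ((a + p) - a))) {a + p..a + q}"
  proof (rule fundamental_theorem_of_calculus)
    fix x assume "x \<in> {a + p..a + q}"
    then have "0 < x - a" using assms by auto
    then show "((\<lambda>t. ln (t - a)) has_vector_derivative 1 / (x - a)) (at x within {a + p..a + q})"
      by (auto intro!: derivative_eq_intros simp flip: has_real_derivative_iff_has_vector_derivative)
  qed (use assms in simp)
  then show ?thesis by simp
qed

lemma has_integral_min_inverse_shift:
  fixes a c :: real
  assumes "1 \<le> c"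
  shows "((\<lambda>t. min c (1 / (t - a))) has_integral (1 + ln c)) {a..a + 1}"
proof -
  have c: "0 < c" using assms by simp
  have "((\<lambda>_. c) has_integral 1) {a..a + 1 / c}"
    using has_integral_const_real[of c a "a + 1 / c"] c by simp
  then have left: "((\<lambda>t. min c (1 / (t - a))) has_integral 1) {a..a + 1 / c}"
  proof (rule has_integral_spike[OF negligible_sing, rotated])
    fix t assume "t \<in> {a..a + 1 / c} - {a}"
    then have "0 < t - a" "t - a \<le> 1 / c" by auto
    then show "min c (1 / (t - a)) = c" using c by (simp add: field_simps)
  qed
  have "((\<lambda>t. min c (1 / (t - a))) has_integral (ln 1 - ln (1 / c))) {a + 1 / c..a + 1}"
  proof (rule has_integral_eq[OF _ has_integral_inverse_shift])
    fix t assume "t \<in> {a + 1 / c..a + 1}"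
    then have "1 / c \<le> t - a" by auto
    moreover have "0 < 1 / c" using c by simp
    ultimately have "0 < t - a" by linarith
    with \<open>1 / c \<le> t - a\<close> have "1 / (t - a) \<le> c" using c by (simp add: field_simps)
    then show "1 / (t - a) = min c (1 / (t - a))" by simp
  qed (use assms in auto)
  then have right: "((\<lambda>t. min c (1 / (t - a))) has_integral ln c) {a + 1 / c..a + 1}"
    using c by (simp add: ln_div)
  show ?thesis
    using has_integral_combine[OF _ _ left right] assms c by simp
qed

lemma integral_min_inverse_restrict_le:
  fixes a b c :: real
  assumes "1 \<le> c" "{a..b} \<subseteq> {0..1}" "b \<le> a + 1"
  shows "(\<lambda>t. if t \<in> {a..b} then min c (1 / (t - a)) else 0) integrable_on {0..1}"
    and "integral {0..1} (\<lambda>t. if t \<in> {a..b} then min c (1 / (t - a)) else 0) \<le> 1 + ln c"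
proof -
  have full: "((\<lambda>t. min c (1 / (t - a))) has_integral (1 + ln c)) {a..a + 1}"
    using has_integral_min_inverse_shift[OF assms(1)] .
  have sub: "{a..b} \<subseteq> {a..a + 1}" using assms(3) by auto
  then have int: "(\<lambda>t. min c (1 / (t - a))) integrable_on {a..b}"
    using integrable_on_subinterval[OF has_integral_integrable[OF full]] by auto
  have cap: "{a..b} \<inter> {0..1} = {a..b}" using assms(2) by auto
  show "(\<lambda>t. if t \<in> {a..b} then min c (1 / (t - a)) else 0) integrable_on {0..1}"
    unfolding integrable_restrict_Int cap by (rule int)
  have "integral {0..1} (\<lambda>t. if t \<in> {a..b} then min c (1 / (t - a)) else 0)
      = integral {a..b} (\<lambda>t. min c (1 / (t - a)))"
    unfolding integral_restrict_Int cap ..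
  also have "\<dots> \<le> integral {a..a + 1} (\<lambda>t. min c (1 / (t - a)))"
    using sub int has_integral_integrable[OF full] assms(1) by (intro integral_subset_le) auto
  also have "\<dots> = 1 + ln c" using full by (rule integral_unique)
  finally show "integral {0..1} (\<lambda>t. if t \<in> {a..b} then min c (1 / (t - a)) else 0) \<le> 1 + ln c" .
qed

section \<open>Bounded weights\<close>

definition bounded_weight :: "(real \<Rightarrow> real) \<Rightarrow> bool" where
  "bounded_weight h \<longleftrightarrow> h \<in> borel_measurable borel \<and> (\<forall>t. 0 \<le> h t \<and> h t \<le> 1)"

lemma bounded_weightD:
  assumes "bounded_weight h"
  shows "h \<in> borel_measurable borel" "0 \<le> h t" "h t \<le> 1"
  using assms by (auto simp: bounded_weight_def)

lemma borel_measurable_lebesgue_on: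
  fixes f :: "real \<Rightarrow> real"
  assumes "f \<in> borel_measurable borel"
  shows "f \<in> borel_measurable (lebesgue_on S)"
proof -
  have "f \<in> borel_measurable lebesgue"
    using assms by (simp add: measurable_completion)
  then show ?thesis by (rule measurable_restrict_space1)
qed

lemma bounded_weight_integrable:
  assumes "bounded_weight h"
  shows "h integrable_on {a..b}"
proof (rule measurable_bounded_by_integrable_imp_integrable[where g = "\<lambda>_. 1"])
  show "h \<in> borel_measurable (lebesgue_on {a..b})"
    using assms by (simp add: bounded_weight_def borel_measurable_lebesgue_on)
qed (use bounded_weightD[OF assms] in auto)

context
  fixes h :: "real \<Rightarrow> real"
  assumes weight: "bounded_weight h"
begin

lemma omega_nonneg: "0 \<le> omega h s t"
  unfolding omega_def
  by (rule integral_nonneg) (use bounded_weight_integrable[OF weight] bounded_weightD[OF weight] in auto)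

lemma omega_add: "s \<le> t \<Longrightarrow> t \<le> u \<Longrightarrow> omega h s u = omega h s t + omega h t u"
  unfolding omega_def using bounded_weight_integrable[OF weight]
  by (simp add: Henstock_Kurzweil_Integration.integral_combine)

lemma omega_le_length:
  assumes "s \<le> t"
  shows "omega h s t \<le> t - s"
proof -
  have "omega h s t \<le> integral {s..t} (\<lambda>_. 1)"
    unfolding omega_def
    by (rule integral_le) (use bounded_weight_integrable[OF weight] bounded_weightD[OF weight] in auto)
  then show ?thesis using assms by simp
qed

lemma omega_mono: "s1 \<le> s2 \<Longrightarrow> s2 \<le> t2 \<Longrightarrow> t2 \<le> t1 \<Longrightarrow> omega h s2 t2 \<le> omega h s1 t1"
  using omega_add[of s1 s2 t1] omega_add[of s2 t2 t1] omega_nonneg[of s1 s2] omega_nonneg[of t2 t1]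
  by linarith

lemma mono_omega: "mono (omega h a)"
proof
  fix x y :: real assume "x \<le> y"
  show "omega h a x \<le> omega h a y"
  proof (cases "a \<le> x")
    case True
    then show ?thesis using omega_mono[of a a x y] \<open>x \<le> y\<close> by simp
  next
    case False
    then show ?thesis by (simp add: omega_def omega_nonneg[unfolded omega_def])
  qed
qed

lemma continuous_on_omega_right: "continuous_on {s..b} (omega h s)"
  unfolding omega_def
  by (rule indefinite_integral_continuous_1) (rule bounded_weight_integrable[OF weight])

lemma continuous_on_omega_left: "continuous_on {a..t} (\<lambda>s. omega h s t)"
  unfolding omega_def
  by (rule indefinite_integral_continuous_1') (rule bounded_weight_integrable[OF weight])

end

lemma omega_refl: "omega h s s = 0"
  by (simp add: omega_def)

lemma omega_zero: "omega (\<lambda>_. 0) s t = 0"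
  by (simp add: omega_def)

lemma omega_eq_const:
  assumes "s \<le> t" "\<And>x. s < x \<Longrightarrow> x \<le> t \<Longrightarrow> h x = c"
  shows "omega h s t = c * (t - s)"
proof -
  have "omega h s t = integral {s..t} (\<lambda>_. c)"
    unfolding omega_def by (rule integral_spike[of "{s}"]) (use assms in auto)
  then show ?thesis using assms by simp
qed

section \<open>Diagonal Hamiltonians of trace one\<close>

locale diagonal_hamiltonian =
  fixes h1 h2 h3 :: "real \<Rightarrow> real"
  assumes weight1: "bounded_weight h1" and weight2: "bounded_weight h2"
    and diagonal: "\<And>t. h3 t = 0"
    and trace_one: "\<And>t. 0 < t \<Longrightarrow> t \<le> 1 \<Longrightarrow> h1 t + h2 t = 1"
begin

abbreviation "D \<equiv> detOmega h1 h2 h3"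

lemma omega_h3: "omega h3 s t = 0"
proof -
  have "h3 = (\<lambda>_. 0)" using diagonal by auto
  then show ?thesis by (simp add: omega_zero)
qed

lemma det_eq: "D s t = omega h1 s t * omega h2 s t"
  by (simp add: detOmega_def omega_h3)

lemma omega_sum_length:
  assumes "0 \<le> s" "s \<le> t" "t \<le> 1"
  shows "omega h1 s t + omega h2 s t = t - s"
proof -
  have "omega h1 s t + omega h2 s t = integral {s..t} (\<lambda>x. h1 x + h2 x)"
    unfolding omega_def
    by (rule integral_add[symmetric]) (auto intro: bounded_weight_integrable weight1 weight2)
  also have "\<dots> = integral {s..t} (\<lambda>_. 1)"
    by (rule integral_spike[of "{s}"]) (use assms trace_one in auto)
  finally show ?thesis using assms by simp
qed

lemma det_refl: "D s s = 0"
  by (simp add: det_eq omega_refl)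

lemma det_mono: "s1 \<le> s2 \<Longrightarrow> s2 \<le> t2 \<Longrightarrow> t2 \<le> t1 \<Longrightarrow> D s2 t2 \<le> D s1 t1"
  unfolding det_eq by (intro mult_mono omega_mono omega_nonneg weight1 weight2) auto

text \<open>Enlarging an interval adds length, which must go to one of the two factors; both are
  positive once the determinant is.\<close>
lemma det_strict_mono:
  assumes "0 \<le> s1" "s1 \<le> s2" "s2 \<le> t2" "t2 \<le> t1" "t1 \<le> 1" "s1 < s2 \<or> t2 < t1"
    and "0 < D s2 t2"
  shows "D s2 t2 < D s1 t1"
proof -
  let ?a = "omega h1 s1 t1" and ?b = "omega h2 s1 t1"
  let ?a' = "omega h1 s2 t2" and ?b' = "omega h2 s2 t2"
  have le: "?a' \<le> ?a" "?b' \<le> ?b"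
    using assms by (auto intro!: omega_mono weight1 weight2)
  have "0 \<le> ?a'" "0 \<le> ?b'"
    by (simp_all add: omega_nonneg weight1 weight2)
  then have pos: "0 < ?a'" "0 < ?b'"
    using assms(7) by (auto simp: det_eq zero_less_mult_iff)
  have "?a' < ?a \<or> ?b' < ?b"
    using le omega_sum_length[of s1 t1] omega_sum_length[of s2 t2] assms(1-6) by linarith
  then have "?a' * ?b' < ?a * ?b"
    using le pos by (auto intro: mult_less_le_imp_less mult_le_less_imp_less)
  then show ?thesis by (simp add: det_eq)
qed

lemma det_le_quarter_square:
  assumes "0 \<le> s" "s \<le> t" "t \<le> 1"
  shows "D s t \<le> (t - s)\<^sup>2 / 4"
proof -
  have "(t - s)\<^sup>2 - 4 * D s t = (omega h1 s t - omega h2 s t)\<^sup>2"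
    unfolding det_eq omega_sum_length[OF assms, symmetric] by (simp add: power2_eq_square algebra_simps)
  then show ?thesis
    using zero_le_power2[of "omega h1 s t - omega h2 s t"] by linarith
qed

lemma continuous_on_det_right: "continuous_on {s..b} (D s)"
  unfolding det_eq by (intro continuous_intros continuous_on_omega_right weight1 weight2)

lemma continuous_on_det_left: "continuous_on {a..t} (\<lambda>s. D s t)"
  unfolding det_eq by (intro continuous_intros continuous_on_omega_left weight1 weight2)

lemma det_inj_right:
  assumes "0 \<le> s" "s \<le> t" "t \<le> 1" "s \<le> t'" "t' \<le> 1" "D s t = D s t'" "0 < D s t"
  shows "t = t'"
  using det_strict_mono[of s s t t'] det_strict_mono[of s s t' t] assms
  by (cases t t' rule: linorder_cases) auto

lemma det_inj_left:
  assumes "0 \<le> s" "s \<le> t" "0 \<le> s'" "s' \<le> t" "t \<le> 1" "D s t = D s' t" "0 < D s t"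
  shows "s = s'"
  using det_strict_mono[of s s' t t] det_strict_mono[of s' s t t] assms
  by (cases s s' rule: linorder_cases) auto

end

declare sigma.simps(2) [simp del]

locale diagonal_hamiltonian_scale = diagonal_hamiltonian +
  fixes r :: real
  assumes r_pos: "0 < r" and det_exceeds: "1 / r\<^sup>2 < D 0 1"
begin

abbreviation "eps \<equiv> 1 / r\<^sup>2"

lemma eps_pos: "0 < eps"
  using r_pos by simp

lemma eps_le_det_imp_le:
  assumes "0 \<le> s" "s \<le> t" "t \<le> t'" "t' \<le> 1" "D s t' = eps" "eps \<le> D s t"
  shows "t' \<le> t"
proof (rule ccontr)
  assume "\<not> t' \<le> t"
  then have "D s t < D s t'"
    using det_strict_mono[of s s t t'] assms eps_pos by simp
  then show False using assms by simp
qed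

definition t_hat :: real where "t_hat = that h1 h2 h3 r"

lemma t_hat_ex1: "\<exists>!t. 0 \<le> t \<and> t \<le> 1 \<and> D 0 t = eps"
proof (rule ex_ex1I)
  have "D 0 0 \<le> eps" "eps \<le> D 0 1"
    using det_refl eps_pos det_exceeds by simp_all
  then show "\<exists>t. 0 \<le> t \<and> t \<le> 1 \<and> D 0 t = eps"
    using IVT'[of "D 0" 0 eps 1] continuous_on_det_right[of 0 1] by auto
next
  fix t t' assume "0 \<le> t \<and> t \<le> 1 \<and> D 0 t = eps" "0 \<le> t' \<and> t' \<le> 1 \<and> D 0 t' = eps"
  then show "t = t'" using det_inj_right[of 0 t t'] eps_pos by simp
qed

lemma t_hat: "0 \<le> t_hat" "t_hat \<le> 1" "D 0 t_hat = eps"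
  using theI'[OF t_hat_ex1] by (simp_all add: t_hat_def that_def)

lemma t_hat_pos: "0 < t_hat"
proof -
  have "D 0 t_hat \<noteq> D 0 0" using t_hat(3) eps_pos by (simp add: det_refl)
  then have "t_hat \<noteq> 0" by metis
  then show ?thesis using t_hat(1) by simp
qed

lemma t_hat_lower: "2 / r \<le> t_hat"
proof -
  have "eps \<le> t_hat\<^sup>2 / 4"
    using det_le_quarter_square[of 0 t_hat] t_hat by simp
  moreover have "(2 / r)\<^sup>2 = 4 * eps" by (simp add: power_divide)
  ultimately have "(2 / r)\<^sup>2 \<le> t_hat\<^sup>2" by linarith
  then show ?thesis using t_hat_pos by (rule power2_le_imp_le[OF _ less_imp_le])
qed

lemma t_hat_le_iff:
  assumes "0 \<le> t" "t \<le> 1"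
  shows "t_hat \<le> t \<longleftrightarrow> eps \<le> D 0 t"
proof
  assume "t_hat \<le> t"
  then show "eps \<le> D 0 t" using det_mono[of 0 0 t_hat t] t_hat by simp
next
  assume "eps \<le> D 0 t"
  show "t_hat \<le> t"
  proof (rule ccontr)
    assume "\<not> t_hat \<le> t"
    then show False
      using eps_le_det_imp_le[of 0 t t_hat] t_hat assms \<open>eps \<le> D 0 t\<close> by simp
  qed
qed

definition s_hat :: "real \<Rightarrow> real" where "s_hat t = shat h1 h2 h3 t r"

lemma s_hat_ex1:
  assumes "t_hat \<le> t" "t \<le> 1"
  shows "\<exists>!s. 0 \<le> s \<and> s \<le> t \<and> D s t = eps"
proof (rule ex_ex1I)
  have "0 \<le> t" using assms t_hat by linarith
  moreover have "D t t \<le> eps"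
    using eps_pos by (simp add: det_refl)
  moreover have "eps \<le> D 0 t"
    using t_hat_le_iff[OF \<open>0 \<le> t\<close> assms(2)] assms(1) by blast
  ultimately show "\<exists>s. 0 \<le> s \<and> s \<le> t \<and> D s t = eps"
    using IVT2'[of "\<lambda>s. D s t" t eps 0] continuous_on_det_left[of 0 t] by auto
next
  fix s s' assume "0 \<le> s \<and> s \<le> t \<and> D s t = eps" "0 \<le> s' \<and> s' \<le> t \<and> D s' t = eps"
  then show "s = s'" using det_inj_left[of s t s'] eps_pos assms(2) by auto
qed

lemma s_hat:
  assumes "t_hat \<le> t" "t \<le> 1"
  shows "0 \<le> s_hat t" "s_hat t \<le> t" "D (s_hat t) t = eps"
  using theI'[OF s_hat_ex1[OF assms]] by (simp_all add: s_hat_def shat_def)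

lemma s_hat_ge:
  assumes "t_hat \<le> t" "t \<le> 1" "0 \<le> s" "s \<le> t" "eps \<le> D s t"
  shows "s \<le> s_hat t"
proof (rule ccontr)
  assume "\<not> s \<le> s_hat t"
  then have "D s t < D (s_hat t) t"
    using det_strict_mono[of "s_hat t" s t t] s_hat[OF assms(1,2)] assms eps_pos by simp
  then show False using s_hat[OF assms(1,2)] assms by simp
qed

lemma s_hat_mono:
  assumes "t_hat \<le> t" "t \<le> t'" "t' \<le> 1"
  shows "s_hat t \<le> s_hat t'"
proof (rule s_hat_ge)
  show "eps \<le> D (s_hat t) t'"
    using det_mono[of "s_hat t" "s_hat t" t t'] s_hat[of t] assms by simp
qed (use s_hat[of t] assms in auto)

lemma eps_le_omega_s_hat:
  assumes "t_hat \<le> t" "t \<le> 1"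
  shows "eps \<le> omega h1 (s_hat t) t"
proof -
  have "omega h2 (s_hat t) t \<le> 1"
    using omega_le_length[OF weight2, of "s_hat t" t] s_hat[OF assms] assms by linarith
  then have "omega h1 (s_hat t) t * omega h2 (s_hat t) t \<le> omega h1 (s_hat t) t"
    by (simp add: mult_left_le omega_nonneg weight1 weight2)
  then show ?thesis using s_hat(3)[OF assms] by (simp add: det_eq)
qed

lemma sigma_step_ex1:
  assumes "0 \<le> x" "x \<le> 1" "eps < D x 1"
  shows "\<exists>!s. x < s \<and> s < 1 \<and> D x s = eps"
proof (rule ex_ex1I)
  have "D x x \<le> eps" using eps_pos by (simp add: det_refl)
  then obtain s where s: "x \<le> s" "s \<le> 1" "D x s = eps"
    using IVT'[of "D x" x eps 1] assms continuous_on_det_right[of x 1] by auto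
  moreover have "s \<noteq> x" using s eps_pos by (auto simp: det_refl)
  moreover have "s \<noteq> 1" using s assms by auto
  ultimately have "x < s" "s < 1" by auto
  with s show "\<exists>s. x < s \<and> s < 1 \<and> D x s = eps" by blast
next
  fix s s' assume "x < s \<and> s < 1 \<and> D x s = eps" "x < s' \<and> s' < 1 \<and> D x s' = eps"
  then show "s = s'" using det_inj_right[of x s s'] eps_pos assms(1) by auto
qed

abbreviation \<sigma> :: "nat \<Rightarrow> real" where "\<sigma> j \<equiv> sigma h1 h2 h3 r j"

lemma sigma_bounds: "0 \<le> \<sigma> j \<and> \<sigma> j \<le> 1"
proof (induction j)
  case (Suc j)
  show ?case
  proof (cases "eps < D (\<sigma> j) 1")
    case True
    then have "\<sigma> j < \<sigma> (Suc j) \<and> \<sigma> (Suc j) < 1"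
      using theI'[OF sigma_step_ex1] Suc by (simp add: sigma.simps(2))
    then show ?thesis using Suc by simp
  qed (simp add: sigma.simps(2))
qed simp

lemma sigma_Suc:
  assumes "eps < D (\<sigma> j) 1"
  shows "\<sigma> j < \<sigma> (Suc j)" "\<sigma> (Suc j) < 1" "D (\<sigma> j) (\<sigma> (Suc j)) = eps"
  using theI'[OF sigma_step_ex1] sigma_bounds[of j] assms by (simp_all add: sigma.simps(2))

lemma sigma_Suc_stop: "\<not> eps < D (\<sigma> j) 1 \<Longrightarrow> \<sigma> (Suc j) = 1"
  by (simp add: sigma.simps(2))

lemma sigma_le_Suc: "\<sigma> j \<le> \<sigma> (Suc j)"
  using sigma_Suc[of j] sigma_Suc_stop[of j] sigma_bounds[of j] by (cases "eps < D (\<sigma> j) 1") auto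

lemma sigma_one: "\<sigma> 1 = t_hat"
proof -
  have "eps < D (\<sigma> 0) 1" using det_exceeds by simp
  from sigma_Suc[OF this] show ?thesis
    using t_hat_ex1 t_hat by (metis One_nat_def less_imp_le sigma.simps(1))
qed

lemma sigma_ge_t_hat: "0 < j \<Longrightarrow> t_hat \<le> \<sigma> j"
proof (induction j)
  case (Suc j)
  then show ?case using sigma_one sigma_le_Suc[of j] by (cases "j = 0") auto
qed simp

lemma sigma_Suc_le:
  assumes "\<sigma> j \<le> y" "y \<le> 1" "eps < D (\<sigma> j) y"
  shows "\<sigma> (Suc j) \<le> y"
proof -
  have "eps < D (\<sigma> j) 1"
    using det_mono[of "\<sigma> j" "\<sigma> j" y 1] assms by simp
  then show ?thesis
    using eps_le_det_imp_le[of "\<sigma> j" y "\<sigma> (Suc j)"] sigma_Suc[of j] sigma_bounds[of j] assms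
    by (cases "\<sigma> (Suc j) \<le> y") auto
qed

lemma kappa_least:
  assumes "0 < j" "\<sigma> j = 1"
  shows "0 < kappa h1 h2 h3 r" "\<sigma> (kappa h1 h2 h3 r) = 1" "kappa h1 h2 h3 r \<le> j"
  using LeastI[of "\<lambda>j. 0 < j \<and> \<sigma> j = 1" j] Least_le[of "\<lambda>j. 0 < j \<and> \<sigma> j = 1" j] assms
  by (simp_all add: kappa_def)

abbreviation K :: "real \<Rightarrow> real" where "K t \<equiv> KH h1 h2 h3 t r"

lemma K_below_t_hat: "0 \<le> t \<Longrightarrow> t < t_hat \<Longrightarrow> K t = r\<^sup>2 * omega h2 0 t * h1 t"
  using r_pos by (simp add: KH_def omega_h3 flip: t_hat_def)

lemma K_above_t_hat: "t_hat \<le> t \<Longrightarrow> t < 1 \<Longrightarrow> K t = h1 t / omega h1 (s_hat t) t"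
  by (simp add: KH_def flip: t_hat_def s_hat_def)

lemma K_one: "K 1 = 0"
  using t_hat by (simp add: KH_def flip: t_hat_def)

lemma K_cases:
  assumes "0 \<le> t" "t \<le> 1"
  obtains "t < t_hat" "K t = r\<^sup>2 * omega h2 0 t * h1 t"
    | "t_hat \<le> t" "t < 1" "K t = h1 t / omega h1 (s_hat t) t"
    | "t = 1" "K t = 0"
  using K_below_t_hat[OF assms(1)] K_above_t_hat K_one assms by (metis linorder_not_le order_le_less)

lemma K_nonneg:
  assumes "0 \<le> t" "t \<le> 1"
  shows "0 \<le> K t"
  using assms by (cases rule: K_cases) (simp_all add: omega_nonneg weight1 weight2 bounded_weightD)

lemma K_le_square:
  assumes "0 \<le> t" "t \<le> 1"
  shows "K t \<le> r\<^sup>2"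
  using assms
proof (cases rule: K_cases)
  case 1
  have "omega h2 0 t * h1 t \<le> 1"
    using omega_le_length[OF weight2, of 0 t] assms
    by (intro mult_le_one) (simp_all add: omega_nonneg weight1 weight2 bounded_weightD)
  then have "r\<^sup>2 * (omega h2 0 t * h1 t) \<le> r\<^sup>2 * 1" by (intro mult_left_mono) auto
  with 1 show ?thesis by (simp add: mult.assoc)
next
  case 2
  have "h1 t / omega h1 (s_hat t) t \<le> 1 / eps"
    by (rule frac_le) (use 2 eps_le_omega_s_hat[of t] eps_pos bounded_weightD[OF weight1] in auto)
  with 2 show ?thesis by simp
qed simp

lemma K_integrable: "K integrable_on {0..1}"
proof (rule measurable_bounded_by_integrable_imp_integrable[where g = "\<lambda>_. r\<^sup>2"])
  txt \<open>Measurability: s_hat is monotone, so K agrees on [0, 1] with a combination of monotone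
    functions.\<close>
  define s' where "s' t = s_hat (max t_hat (min t 1))" for t
  have "mono s'"
    unfolding s'_def using t_hat by (intro monoI s_hat_mono) auto
  note [measurable] = borel_measurable_mono[OF this]
    borel_measurable_mono[OF mono_omega[OF weight1]] borel_measurable_mono[OF mono_omega[OF weight2]]
    bounded_weightD(1)[OF weight1]
  define K' where "K' t = (if t < t_hat then r\<^sup>2 * omega h2 0 t * h1 t
    else if t < 1 then h1 t / (omega h1 0 t - omega h1 0 (s' t)) else 0)" for t
  have "K' \<in> borel_measurable borel"
    unfolding K'_def by measurable
  then have "K' \<in> borel_measurable (lebesgue_on {0..1})"
    by (rule borel_measurable_lebesgue_on)
  moreover have "K t = K' t" if "t \<in> space (lebesgue_on {0..1})" for t
  proof -
    from that have "0 \<le> t" "t \<le> 1" by auto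
    then show ?thesis
    proof (cases rule: K_cases)
      case 2
      then have "omega h1 0 t = omega h1 0 (s_hat t) + omega h1 (s_hat t) t"
        using s_hat[of t] by (intro omega_add weight1) auto
      then show ?thesis using 2 t_hat by (simp add: K'_def s'_def)
    qed (use t_hat in \<open>auto simp: K'_def\<close>)
  qed
  ultimately show "K \<in> borel_measurable (lebesgue_on {0..1})"
    using measurable_cong[of "lebesgue_on {0..1}" K K' borel] by blast
qed (use K_nonneg K_le_square in auto)

end

section \<open>The alternating Hamiltonian\<close>

definition level :: "real \<Rightarrow> nat" where "level t = nat \<lfloor>- ln t\<rfloor>"

lemma level_ln:
  assumes "0 < t" "t \<le> 1"
  shows "real (level t) \<le> - ln t" "- ln t < real (level t) + 1"
proof -
  have "0 \<le> - ln t" using assms by simp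
  then have "real (level t) = of_int \<lfloor>- ln t\<rfloor>" by (simp add: level_def)
  then show "real (level t) \<le> - ln t" "- ln t < real (level t) + 1" by linarith+
qed

lemma level_bounds:
  assumes "0 < t" "t \<le> 1"
  shows "exp (- real (level t) - 1) < t" "t \<le> exp (- real (level t))"
proof -
  have "exp (- real (level t) - 1) < exp (ln t)" "exp (ln t) \<le> exp (- real (level t))"
    using level_ln[OF assms] by simp_all
  then show "exp (- real (level t) - 1) < t" "t \<le> exp (- real (level t))"
    using assms by simp_all
qed

lemma level_eqI:
  assumes "exp (- real m - 1) < t" "t \<le> exp (- real m)"
  shows "level t = m"
proof -
  have "0 < t" using assms(1) exp_gt_zero by (metis less_trans)
  then have "exp (- real m - 1) < exp (ln t)" "exp (ln t) \<le> exp (- real m)"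
    using assms by simp_all
  then have "- real m - 1 < ln t" "ln t \<le> - real m" by simp_all
  then have "\<lfloor>- ln t\<rfloor> = int m" by (intro floor_unique) auto
  then show ?thesis by (simp add: level_def)
qed

lemma level_ge:
  assumes "0 < t" "t \<le> exp (- real k)"
  shows "k \<le> level t"
proof -
  have "exp (ln t) \<le> exp (- real k)" using assms by simp
  then have "real k \<le> - ln t" by simp
  then show ?thesis by (simp add: level_def le_nat_iff le_floor_iff)
qed

lemma level_antimono:
  assumes "0 < x" "x \<le> y" "y \<le> 1"
  shows "level y \<le> level x"
  unfolding level_def using assms by (intro nat_mono floor_mono) simp

lemma level_one: "level 1 = 0"
  by (simp add: level_def)

lemma exp_minus_one_two_less: "exp (- 1) + exp (- 2) < (1::real)"
proof -
  have "2 \<le> exp (1::real)" using exp_ge_add_one_self[of 1] by simp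
  then have "exp (- 1) \<le> (1 / 2 :: real)" by (simp add: exp_minus field_simps)
  moreover have "exp (- 2) = exp (- 1) * (exp (- 1) :: real)" by (simp flip: exp_add)
  ultimately have "exp (- 2) \<le> (1 / 4 :: real)"
    using mult_mono[of "exp (- 1)" "1 / 2" "exp (- 1)" "1 / 2 :: real"] by simp
  with \<open>exp (- 1) \<le> 1 / 2\<close> show ?thesis by linarith
qed

lemma hA_level:
  assumes "0 < t" "t \<le> 1"
  shows "hA t = (if even (level t) then 1 else 0)"
proof -
  have "(\<exists>n::nat. exp (- (2 * real n + 1)) < t \<and> t \<le> exp (- (2 * real n))) \<longleftrightarrow> even (level t)"
  proof
    assume "\<exists>n::nat. exp (- (2 * real n + 1)) < t \<and> t \<le> exp (- (2 * real n))"
    then obtain n :: nat where "exp (- (2 * real n + 1)) < t" "t \<le> exp (- (2 * real n))"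
      by blast
    moreover have "- real (2 * n) - 1 = - (2 * real n + 1)" "- real (2 * n) = - (2 * real n)"
      by simp_all
    ultimately have "level t = 2 * n" using level_eqI[of "2 * n" t] by (simp only:)
    then show "even (level t)" by simp
  next
    assume "even (level t)"
    then obtain n where "level t = 2 * n" by blast
    then have e: "- real (level t) - 1 = - (2 * real n + 1)" "- real (level t) = - (2 * real n)"
      by simp_all
    show "\<exists>n::nat. exp (- (2 * real n + 1)) < t \<and> t \<le> exp (- (2 * real n))"
      using level_bounds(1)[OF assms, unfolded e(1)] level_bounds(2)[OF assms, unfolded e(2)] by blast
  qed
  then show ?thesis by (simp add: hA_def)
qed

lemma hB_level:
  assumes "0 < t" "t \<le> 1"
  shows "hB t = (if odd (level t) then 1 else 0)"
proof -
  have "(\<exists>n::nat. exp (- (2 * real n + 2)) < t \<and> t \<le> exp (- (2 * real n + 1))) \<longleftrightarrow> odd (level t)"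
  proof
    assume "\<exists>n::nat. exp (- (2 * real n + 2)) < t \<and> t \<le> exp (- (2 * real n + 1))"
    then obtain n :: nat where "exp (- (2 * real n + 2)) < t" "t \<le> exp (- (2 * real n + 1))"
      by blast
    moreover have "- real (2 * n + 1) - 1 = - (2 * real n + 2)" "- real (2 * n + 1) = - (2 * real n + 1)"
      by simp_all
    ultimately have "level t = 2 * n + 1" using level_eqI[of "2 * n + 1" t] by (simp only:)
    then show "odd (level t)" by simp
  next
    assume "odd (level t)"
    then obtain n where "level t = 2 * n + 1" using oddE by blast
    then have e: "- real (level t) - 1 = - (2 * real n + 2)" "- real (level t) = - (2 * real n + 1)"
      by simp_all
    show "\<exists>n::nat. exp (- (2 * real n + 2)) < t \<and> t \<le> exp (- (2 * real n + 1))"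
      using level_bounds(1)[OF assms, unfolded e(1)] level_bounds(2)[OF assms, unfolded e(2)] by blast
  qed
  then show ?thesis by (simp add: hB_def)
qed

lemma hA_indicator: "hA = indicator (\<Union>n::nat. {exp (- (2 * real n + 1))<..exp (- (2 * real n))})"
  by (auto simp: hA_def indicator_def fun_eq_iff)

lemma bounded_weight_hA: "bounded_weight hA"
proof -
  have "hA \<in> borel_measurable borel"
    unfolding hA_indicator by measurable
  moreover have "0 \<le> hA t \<and> hA t \<le> 1" for t
    by (simp add: hA_def)
  ultimately show ?thesis by (simp add: bounded_weight_def)
qed

lemma hB_indicator: "hB = indicator (\<Union>n::nat. {exp (- (2 * real n + 2))<..exp (- (2 * real n + 1))})"
  by (auto simp: hB_def indicator_def fun_eq_iff)

lemma bounded_weight_hB: "bounded_weight hB"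
proof -
  have "hB \<in> borel_measurable borel"
    unfolding hB_indicator by measurable
  moreover have "0 \<le> hB t \<and> hB t \<le> 1" for t
    by (simp add: hB_def)
  ultimately show ?thesis by (simp add: bounded_weight_def)
qed

interpretation alternating: diagonal_hamiltonian hA hB hC
proof
  fix t :: real assume "0 < t" "t \<le> 1"
  then show "hA t + hB t = 1" by (simp add: hA_level hB_level)
qed (simp_all add: bounded_weight_hA bounded_weight_hB hC_def)

lemma omega_level:
  assumes "exp (- real m - 1) \<le> x" "x \<le> y" "y \<le> exp (- real m)"
  shows "omega hA x y = (if even m then y - x else 0)" "omega hB x y = (if odd m then y - x else 0)"
proof -
  have "hA z = (if even m then 1 else 0) \<and> hB z = (if odd m then 1 else 0)"
    if "x < z" "z \<le> y" for z
  proof -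
    have "exp (- real m - 1) < z" "z \<le> exp (- real m)" using that assms by auto
    moreover have "0 < z" using that assms exp_gt_zero[of "- real m - 1"] by linarith
    moreover have "z \<le> 1" using \<open>z \<le> exp (- real m)\<close> by (simp add: order_trans)
    ultimately show ?thesis using level_eqI by (simp add: hA_level hB_level)
  qed
  then have "omega hA x y = (if even m then 1 else 0) * (y - x)"
    "omega hB x y = (if odd m then 1 else 0) * (y - x)"
    using omega_eq_const[OF assms(2)] by blast+
  then show "omega hA x y = (if even m then y - x else 0)" "omega hB x y = (if odd m then y - x else 0)"
    by simp_all
qed

lemma det_one_level:
  assumes "exp (- real m - 1) \<le> x" "x \<le> y" "y \<le> exp (- real m)"
  shows "detOmega hA hB hC x y = 0"
  using omega_level[OF assms] by (simp add: alternating.det_eq)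

lemma det_from_odd_level:
  assumes "even m" "exp (- real m - 1) \<le> t" "t \<le> exp (- real m)"
  shows "detOmega hA hB hC (exp (- real m - 2)) t
    = (t - exp (- real m - 1)) * (exp (- real m - 1) - exp (- real m - 2))"
    and "omega hA (exp (- real m - 2)) t = t - exp (- real m - 1)"
proof -
  define a c where "a = exp (- real m - 1)" and "c = exp (- real m - 2)"
  have ca: "c \<le> a" by (simp add: a_def c_def)
  have "exp (- real (Suc m) - 1) = c" "exp (- real (Suc m)) = a"
    by (simp_all add: a_def c_def algebra_simps)
  then have odd_level: "omega hA c a = 0" "omega hB c a = a - c"
    using omega_level[of "Suc m" c a] ca assms(1) by simp_all
  have even_level: "omega hA a t = t - a" "omega hB a t = 0"
    using omega_level[of m a t, folded a_def] assms by (simp_all add: a_def)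
  show w1: "omega hA (exp (- real m - 2)) t = t - exp (- real m - 1)"
    using omega_add[OF bounded_weight_hA, of c a t] odd_level even_level ca assms(2)
    by (simp add: a_def c_def)
  have "omega hB c t = a - c"
    using omega_add[OF bounded_weight_hB, of c a t] odd_level even_level ca assms(2)
    by (simp add: a_def)
  then show "detOmega hA hB hC (exp (- real m - 2)) t
    = (t - exp (- real m - 1)) * (exp (- real m - 1) - exp (- real m - 2))"
    using w1 by (simp add: alternating.det_eq a_def c_def)
qed

lemma det_two_levels:
  "detOmega hA hB hC (exp (- real k - 2)) (exp (- real k)) = exp (- 2 * real k - 3) * (exp 1 - 1)\<^sup>2"
proof -
  define p q u where "p = exp (- real k - 2)" and "q = exp (- real k - 1)" and "u = exp (- real k)"
  have pq: "p \<le> q" "q \<le> u" by (simp_all add: p_def q_def u_def)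
  have "- real (Suc k) - 1 = - real k - 2" "- real (Suc k) = - real k - 1" by simp_all
  then have e: "exp (- real (Suc k) - 1) = p" "exp (- real (Suc k)) = q"
    by (simp_all add: p_def q_def)
  have lower: "omega hA p q = (if odd k then q - p else 0)" "omega hB p q = (if even k then q - p else 0)"
    using omega_level[of "Suc k" p q, unfolded e] pq by simp_all
  have upper: "omega hA q u = (if even k then u - q else 0)" "omega hB q u = (if odd k then u - q else 0)"
    using omega_level[of k q u, folded q_def u_def] pq by simp_all
  have "omega hA p u = omega hA p q + omega hA q u" "omega hB p u = omega hB p q + omega hB q u"
    using pq by (simp_all add: omega_add[OF bounded_weight_hA, of p q u] omega_add[OF bounded_weight_hB, of p q u])
  then have "detOmega hA hB hC p u = (u - q) * (q - p)"
    using lower upper by (cases "even k") (simp_all add: alternating.det_eq)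
  also have "\<dots> = q * p * (exp 1 - 1)\<^sup>2"
  proof -
    have "u - q = q * (exp 1 - 1)" "q - p = p * (exp 1 - 1)"
      by (simp_all add: p_def q_def u_def right_diff_distrib mult_exp_exp)
    then show ?thesis by (simp add: power2_eq_square)
  qed
  also have "q * p = exp (- 2 * real k - 3)"
    by (simp add: p_def q_def mult_exp_exp)
  finally show ?thesis by (simp add: p_def u_def)
qed

lemma det_lower_two_levels:
  assumes "0 \<le> x" "x \<le> exp (- real k - 2)" "exp (- real k) \<le> y" "y \<le> 1"
  shows "exp (- 2 * real k - 3) \<le> detOmega hA hB hC x y"
proof -
  have "1 \<le> exp (1::real) - 1" using exp_ge_add_one_self[of 1] by simp
  then have "1 \<le> (exp (1::real) - 1)\<^sup>2" by (simp add: one_le_power)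
  then have "exp (- 2 * real k - 3) \<le> detOmega hA hB hC (exp (- real k - 2)) (exp (- real k))"
    unfolding det_two_levels by simp
  also have "\<dots> \<le> detOmega hA hB hC x y"
    using assms by (intro alternating.det_mono) simp_all
  finally show ?thesis .
qed

lemma det_from_zero_lower:
  assumes "0 < t" "t \<le> 1"
  shows "t\<^sup>2 * exp (- 5) \<le> detOmega hA hB hC 0 t"
proof -
  have bounds: "exp (- real (level t) - 1) < t" "t \<le> exp (- real (level t))"
    using level_bounds[OF assms] by simp_all
  have "t\<^sup>2 * exp (- 5) \<le> (exp (- real (level t)))\<^sup>2 * exp (- 5)"
    using bounds assms by (intro mult_right_mono power_mono) simp_all
  also have "\<dots> = exp (- 2 * real (Suc (level t)) - 3)"
    by (simp add: power2_eq_square mult_exp_exp algebra_simps)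
  also have "\<dots> \<le> detOmega hA hB hC 0 t"
  proof (rule det_lower_two_levels)
    have "exp (- real (Suc (level t))) = exp (- real (level t) - 1)" by (simp add: algebra_simps)
    then show "exp (- real (Suc (level t))) \<le> t" using bounds(1) by linarith
  qed (use assms in simp_all)
  finally show ?thesis .
qed

section \<open>Asymptotics of kappa and of the integral of K\<close>

locale alternating_scale =
  fixes r :: real
  assumes r_large: "exp 16 \<le> r"
begin

lemma ln_r_ge: "16 \<le> ln r"
  using r_large by (metis exp_gt_zero exp_le_cancel_iff exp_ln less_le_trans)

lemma inverse_square_le: "1 / r\<^sup>2 \<le> exp (- 32)"
proof -
  have "exp 16 ^ 2 \<le> r\<^sup>2" using r_large by (intro power_mono) auto
  then have "exp 32 \<le> r\<^sup>2" by (simp add: power2_eq_square flip: exp_add)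
  moreover have "0 < r\<^sup>2" using \<open>exp 32 \<le> r\<^sup>2\<close> exp_gt_zero[of 32] by linarith
  ultimately have "1 / r\<^sup>2 \<le> 1 / exp 32"
    by (intro divide_left_mono) simp_all
  then show ?thesis by (simp add: exp_minus inverse_eq_divide)
qed

end

sublocale alternating_scale \<subseteq> diagonal_hamiltonian_scale hA hB hC r
proof (rule diagonal_hamiltonian_scale.intro[OF alternating.diagonal_hamiltonian_axioms], unfold_locales)
  show "0 < r" using r_large by (metis exp_gt_zero less_le_trans)
  have "exp (- 32) < exp (- 3 :: real)" by simp
  also have "exp (- 3) \<le> detOmega hA hB hC 0 1"
    using det_lower_two_levels[of 0 0 1] by simp
  finally show "1 / r\<^sup>2 < detOmega hA hB hC 0 1"
    using inverse_square_le by linarith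
qed

context alternating_scale
begin

lemma t_hat_upper: "t_hat\<^sup>2 * r\<^sup>2 \<le> exp 5"
proof -
  have "t_hat\<^sup>2 * exp (- 5) \<le> eps"
    using det_from_zero_lower[of t_hat] t_hat t_hat_pos by simp
  then have "t_hat\<^sup>2 * r\<^sup>2 * exp (- 5) \<le> 1"
    using r_pos by (simp add: field_simps)
  have "t_hat\<^sup>2 * r\<^sup>2 = t_hat\<^sup>2 * r\<^sup>2 * exp (- 5) * exp 5"
    by (simp add: mult.assoc flip: exp_add)
  also have "\<dots> \<le> 1 * exp 5"
    using \<open>t_hat\<^sup>2 * r\<^sup>2 * exp (- 5) \<le> 1\<close> by (intro mult_right_mono) simp_all
  finally show ?thesis by simp
qed

lemma level_t_hat_le: "real (level t_hat) \<le> ln r"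
proof -
  have "real (level t_hat) \<le> - ln t_hat"
    using level_ln t_hat t_hat_pos by simp
  also have "\<dots> \<le> - ln (2 / r)"
    using t_hat_lower t_hat_pos r_pos by (subst neg_le_iff_le, subst ln_le_cancel_iff) auto
  also have "\<dots> \<le> ln r"
    using r_pos by (simp add: ln_div)
  finally show ?thesis .
qed

lemma level_t_hat_ge: "ln r - 7 / 2 \<le> real (level t_hat)"
proof -
  have "ln (t_hat\<^sup>2 * r\<^sup>2) \<le> ln (exp 5)"
    using t_hat_upper t_hat_pos r_pos by (subst ln_le_cancel_iff) auto
  then have "2 * ln t_hat + 2 * ln r \<le> 5"
    using t_hat_pos r_pos by (simp add: ln_mult ln_realpow)
  moreover have "- ln t_hat < real (level t_hat) + 1"
    using level_ln t_hat t_hat_pos by simp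
  ultimately show ?thesis by linarith
qed

lemma sigma_pos: "0 < j \<Longrightarrow> 0 < \<sigma> j"
  using sigma_ge_t_hat t_hat_pos by (metis less_le_trans)

lemma level_sigma_Suc_less:
  assumes "0 < j" "eps < D (\<sigma> j) 1"
  shows "level (\<sigma> (Suc j)) < level (\<sigma> j)"
proof -
  note step = sigma_Suc[OF assms(2)]
  have x: "0 < \<sigma> j" using sigma_pos[OF assms(1)] .
  have "level (\<sigma> (Suc j)) \<le> level (\<sigma> j)"
    using step x by (intro level_antimono) simp_all
  moreover have "level (\<sigma> (Suc j)) \<noteq> level (\<sigma> j)"
  proof
    assume same: "level (\<sigma> (Suc j)) = level (\<sigma> j)"
    have "exp (- real (level (\<sigma> j)) - 1) \<le> \<sigma> j"
      using level_bounds(1)[of "\<sigma> j"] x step by simp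
    moreover have "\<sigma> (Suc j) \<le> exp (- real (level (\<sigma> j)))"
      using level_bounds(2)[of "\<sigma> (Suc j)"] same x step by simp
    ultimately have "D (\<sigma> j) (\<sigma> (Suc j)) = 0"
      using step by (intro det_one_level) simp_all
    then show False using step eps_pos by simp
  qed
  ultimately show ?thesis by simp
qed

lemma level_sigma_plus_index:
  assumes "0 < j" "\<sigma> j < 1"
  shows "level (\<sigma> j) + j \<le> level t_hat + 1"
  using assms
proof (induction j)
  case (Suc j)
  show ?case
  proof (cases "j = 0")
    case True
    then show ?thesis using sigma_one by simp
  next
    case False
    have "eps < D (\<sigma> j) 1" using sigma_Suc_stop[of j] Suc.prems by force
    then have "level (\<sigma> (Suc j)) < level (\<sigma> j)" "\<sigma> j < 1"
      using level_sigma_Suc_less[of j] sigma_Suc[of j] False by simp_all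
    then show ?thesis using Suc.IH False by simp
  qed
qed simp

lemma sigma_reaches_one: "\<sigma> (level t_hat + 2) = 1"
  using level_sigma_plus_index[of "level t_hat + 2"] sigma_bounds[of "level t_hat + 2"] by fastforce

lemma kappa_upper: "real (kappa hA hB hC r) \<le> 2 * ln r"
  using kappa_least(3)[OF _ sigma_reaches_one] level_t_hat_le ln_r_ge by simp

text \<open>For x of level k, the interval from x to the start of level k - 2 contains the full levels
  k - 1 and k - 2, one of each kind, so its determinant is at least exp (1 - 2 k) > x^2 >= (2 / r)^2.\<close>
lemma eps_less_det_two_levels_up:
  assumes "t_hat \<le> x" "x \<le> 1" "2 \<le> level x"
  shows "eps < D x (exp (- real (level x - 2)))"
proof -
  define k where "k = level x"
  have x: "0 < x" "x \<le> exp (- real k)"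
    using assms t_hat_pos level_bounds[of x] by (simp_all add: k_def)
  have k: "real (k - 2) = real k - 2" using assms by (simp add: k_def)
  have "eps < 4 / r\<^sup>2" using r_pos by (intro divide_strict_right_mono) simp_all
  also have "\<dots> = (2 / r)\<^sup>2" by (simp add: power_divide)
  also have "\<dots> \<le> x\<^sup>2" using t_hat_lower assms r_pos by (intro power_mono) simp_all
  also have "\<dots> \<le> (exp (- real k))\<^sup>2" using x by (intro power_mono) simp_all
  also have "\<dots> \<le> exp (- 2 * real (k - 2) - 3)"
    by (simp add: k power2_eq_square mult_exp_exp algebra_simps)
  also have "\<dots> \<le> D x (exp (- real (k - 2)))"
    using x by (intro det_lower_two_levels) (use assms in \<open>simp_all add: k k_def\<close>)
  finally show ?thesis by (simp add: k_def)
qed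

lemma level_sigma_Suc_ge:
  assumes "0 < j"
  shows "level (\<sigma> j) \<le> level (\<sigma> (Suc j)) + 2"
proof (cases "level (\<sigma> j) \<le> 2")
  case False
  define y where "y = exp (- real (level (\<sigma> j) - 2))"
  have x: "t_hat \<le> \<sigma> j" "\<sigma> j \<le> 1"
    using sigma_ge_t_hat[OF assms] sigma_bounds[of j] by simp_all
  have "\<sigma> j \<le> exp (- real (level (\<sigma> j)))"
    using level_bounds(2)[of "\<sigma> j"] x t_hat_pos by simp
  also have "\<dots> \<le> y" by (simp add: y_def)
  finally have "\<sigma> (Suc j) \<le> y"
    using eps_less_det_two_levels_up[OF x] False by (intro sigma_Suc_le) (simp_all add: y_def)
  then have "level (\<sigma> j) - 2 \<le> level (\<sigma> (Suc j))"
    using sigma_pos[of "Suc j"] by (intro level_ge) (simp_all add: y_def)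
  then show ?thesis by simp
qed simp

lemma level_t_hat_le_sigma: "0 < j \<Longrightarrow> level t_hat \<le> level (\<sigma> j) + 2 * (j - 1)"
proof (induction j)
  case (Suc j)
  then show ?case
    using sigma_one level_sigma_Suc_ge[of j] by (cases "j = 0") auto
qed simp

lemma kappa_lower: "ln r / 4 \<le> real (kappa hA hB hC r)"
proof -
  have "0 < kappa hA hB hC r" "\<sigma> (kappa hA hB hC r) = 1"
    using kappa_least(1,2)[OF _ sigma_reaches_one] by simp_all
  then have "level t_hat \<le> 2 * (kappa hA hB hC r - 1)"
    using level_t_hat_le_sigma[of "kappa hA hB hC r"] by (simp add: level_one)
  then show ?thesis using level_t_hat_ge ln_r_ge by linarith
qed

definition window :: "nat \<Rightarrow> real set" where
  "window m = {exp (- real m - 1) + exp (real m + 2) / r\<^sup>2 .. exp (- real m - 1) + exp (- real m - 2)}"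

lemma window_inside_level:
  assumes "t \<in> window m"
  shows "exp (- real m - 1) < t" "t < exp (- real m)"
proof -
  have "0 < exp (real m + 2) / r\<^sup>2" using r_pos by simp
  then show "exp (- real m - 1) < t" using assms unfolding window_def by auto
  have "t \<le> exp (- real m) * (exp (- 1) + exp (- 2))"
    using assms by (simp add: window_def distrib_left flip: exp_add)
  also have "\<dots> < exp (- real m)"
    using exp_minus_one_two_less by simp
  finally show "t < exp (- real m)" .
qed

lemma level_window: "t \<in> window m \<Longrightarrow> level t = m"
  using window_inside_level by (intro level_eqI) (simp_all add: less_imp_le)

lemma window_subset: "window m \<subseteq> {0<..<1}"
proof
  fix t assume "t \<in> window m"
  note window_inside_level[OF this]
  moreover have "0 < exp (- real m - 1)" "exp (- real m) \<le> 1" by simp_all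
  ultimately have "0 < t" "t < 1" by linarith+
  then show "t \<in> {0<..<1}" by simp
qed

text \<open>Already the interval from the start exp (-m-2) of the odd level m + 1 to t has determinant
  at least eps, so s_hat t \<ge> exp (-m-2) and the mass of hA between s_hat t and t is at most
  t - exp (-m-1).\<close>
lemma K_ge_on_window:
  assumes "even m" "t \<in> window m"
  shows "1 / (t - exp (- real m - 1)) \<le> K t"
proof -
  define a c where "a = exp (- real m - 1)" and "c = exp (- real m - 2)"
  have t: "a < t" "t \<le> exp (- real m)" "0 < t" "t < 1"
    using window_inside_level[OF assms(2)] window_subset[of m] assms(2) unfolding a_def
    by (auto simp del: greaterThanLessThan_iff dest!: subsetD) (simp_all add: greaterThanLessThan_iff)
  have ca: "c \<le> a" by (simp add: a_def c_def)
  note odd = det_from_odd_level[OF assms(1), of t, folded a_def c_def]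
  have "eps \<le> (exp 1 - 1) / r\<^sup>2"
    using exp_ge_add_one_self[of 1] by (intro divide_right_mono) simp_all
  also have "(exp 1 - 1) / r\<^sup>2 = exp (real m + 2) / r\<^sup>2 * (a - c)"
    by (simp add: a_def c_def field_simps flip: exp_add)
  also have "\<dots> \<le> (t - a) * (a - c)"
    using assms(2) ca by (intro mult_right_mono) (simp_all add: window_def a_def)
  also have "\<dots> = D c t" using odd t by simp
  finally have eps_le: "eps \<le> D c t" .
  have "eps \<le> D 0 t"
    using alternating.det_mono[of 0 c t t] eps_le ca t by (simp add: c_def)
  then have "t_hat \<le> t" using t_hat_le_iff t by simp
  then have "c \<le> s_hat t"
    using s_hat_ge[of t c] eps_le ca t by (simp add: c_def)
  then have "omega hA (s_hat t) t \<le> t - a"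
    using omega_mono[OF bounded_weight_hA, of c "s_hat t" t t] s_hat[of t] \<open>t_hat \<le> t\<close> odd t
    by simp
  moreover have "0 < omega hA (s_hat t) t"
    using eps_le_omega_s_hat[of t] \<open>t_hat \<le> t\<close> t eps_pos by linarith
  ultimately have "1 / (t - a) \<le> 1 / omega hA (s_hat t) t"
    by (intro frac_le) simp_all
  moreover have "hA t = 1"
    using hA_level[of t] level_window[OF assms(2)] assms(1) t by simp
  ultimately show ?thesis
    using K_above_t_hat[OF \<open>t_hat \<le> t\<close>] t by (simp add: a_def)
qed

lemma has_integral_window:
  assumes "real m + 2 \<le> ln r"
  shows "((\<lambda>t. 1 / (t - exp (- real m - 1))) has_integral (2 * ln r - 2 * real m - 4)) (window m)"
proof -
  have p: "0 < exp (real m + 2) / r\<^sup>2" using r_pos by simp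
  have ln_p: "ln (exp (real m + 2) / r\<^sup>2) = real m + 2 - 2 * ln r"
    using r_pos by (simp add: ln_div ln_realpow)
  have "ln (exp (real m + 2) / r\<^sup>2) \<le> ln (exp (- real m - 2))"
    using assms by (simp add: ln_p)
  then have "exp (real m + 2) / r\<^sup>2 \<le> exp (- real m - 2)"
    using p by (subst (asm) ln_le_cancel_iff) simp_all
  then have "((\<lambda>t. 1 / (t - exp (- real m - 1))) has_integral
      (ln (exp (- real m - 2)) - ln (exp (real m + 2) / r\<^sup>2))) (window m)"
    unfolding window_def by (rule has_integral_inverse_shift[OF p])
  moreover have "ln (exp (- real m - 2)) - ln (exp (real m + 2) / r\<^sup>2) = 2 * ln r - 2 * real m - 4"
    by (simp add: ln_p)
  ultimately show ?thesis by (simp only:)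
qed

lemma sum_on_windows_le_K:
  assumes "0 \<le> t" "t \<le> 1"
  shows "(\<Sum>n<N. if t \<in> window (2 * n) then 1 / (t - exp (- real (2 * n) - 1)) else 0) \<le> K t"
proof -
  have "(\<Sum>n<N. if t \<in> window (2 * n) then 1 / (t - exp (- real (2 * n) - 1)) else 0)
      \<le> (\<Sum>n<N. if n = level t div 2 then K t else 0)"
  proof (rule sum_mono)
    fix n
    show "(if t \<in> window (2 * n) then 1 / (t - exp (- real (2 * n) - 1)) else 0)
        \<le> (if n = level t div 2 then K t else 0)"
    proof (cases "t \<in> window (2 * n)")
      case True
      then show ?thesis using K_ge_on_window[of "2 * n" t] level_window[of t "2 * n"] by simp
    qed (use K_nonneg assms in simp)
  qed
  also have "\<dots> \<le> K t" using K_nonneg assms by simp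
  finally show ?thesis .
qed

lemma integral_lower: "(ln r)\<^sup>2 / 8 \<le> integral {0..1} K"
proof -
  define N where "N = nat (\<lfloor>ln r / 4\<rfloor> - 1)"
  have N_lower: "ln r / 4 - 2 \<le> real N" using ln_r_ge by (simp add: N_def) linarith
  have N_upper: "4 * real n + 8 \<le> ln r" if "n < N" for n
    using that ln_r_ge by (simp add: N_def) linarith
  have "((\<lambda>t. if t \<in> window (2 * n) then 1 / (t - exp (- real (2 * n) - 1)) else 0)
      has_integral (2 * ln r - 2 * real (2 * n) - 4)) {0..1}" if "n < N" for n
  proof (subst has_integral_restrict)
    show "window (2 * n) \<subseteq> {0..1}"
      using window_subset by fastforce
    show "((\<lambda>t. 1 / (t - exp (- real (2 * n) - 1))) has_integral (2 * ln r - 2 * real (2 * n) - 4)) (window (2 * n))"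
      using N_upper[OF that] by (intro has_integral_window) simp
  qed
  then have "((\<lambda>t. \<Sum>n<N. if t \<in> window (2 * n) then 1 / (t - exp (- real (2 * n) - 1)) else 0)
      has_integral (\<Sum>n<N. 2 * ln r - 2 * real (2 * n) - 4)) {0..1}"
    by (intro has_integral_sum) simp_all
  then have "(\<Sum>n<N. 2 * ln r - 2 * real (2 * n) - 4) \<le> integral {0..1} K"
    using K_integrable sum_on_windows_le_K by (intro has_integral_le[OF _ integrable_integral]) auto
  moreover have "(\<Sum>n<N. ln r) \<le> (\<Sum>n<N. 2 * ln r - 2 * real (2 * n) - 4)"
  proof (rule sum_mono)
    fix n assume "n \<in> {..<N}"
    then have "4 * real n + 8 \<le> ln r" using N_upper by simp
    then show "ln r \<le> 2 * ln r - 2 * real (2 * n) - 4" by simp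
  qed
  moreover have "(ln r)\<^sup>2 / 8 \<le> real N * ln r"
  proof -
    have "(ln r / 4 - 2) * ln r \<le> real N * ln r" using N_lower ln_r_ge by (intro mult_right_mono) auto
    moreover have "(ln r)\<^sup>2 / 8 \<le> (ln r / 4 - 2) * ln r"
    proof -
      have "16 * ln r \<le> ln r * ln r" using ln_r_ge by (intro mult_right_mono) auto
      then show ?thesis by (simp add: power2_eq_square algebra_simps)
    qed
    ultimately show ?thesis by linarith
  qed
  ultimately show ?thesis by simp
qed

lemma K_le_on_even_level:
  assumes "t_hat \<le> t" "t < 1" "level t = 2 * n"
  shows "n \<le> nat \<lfloor>ln r / 2\<rfloor>" "t \<in> {exp (- real (2 * n) - 1)..exp (- real (2 * n))}"
    and "K t \<le> min (r\<^sup>2) (1 / (t - exp (- real (2 * n) - 1)))"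
proof -
  define a where "a = exp (- real (2 * n) - 1)"
  have t: "0 < t" "a < t" "t \<le> exp (- real (2 * n))"
    using t_hat_pos assms level_bounds[of t] by (simp_all add: a_def)
  then show "t \<in> {exp (- real (2 * n) - 1)..exp (- real (2 * n))}" by (simp add: a_def)
  have "level t \<le> level t_hat" using assms t_hat_pos by (intro level_antimono) simp_all
  then have "2 * real n \<le> ln r" using level_t_hat_le assms(3) by simp
  then show "n \<le> nat \<lfloor>ln r / 2\<rfloor>" by (simp add: le_nat_iff le_floor_iff)
  note s = s_hat[OF assms(1) less_imp_le[OF assms(2)]]
  have "s_hat t \<le> a"
  proof (rule ccontr)
    assume "\<not> s_hat t \<le> a"
    then have "D (s_hat t) t = 0"
      using s t by (intro det_one_level[of "2 * n"]) (simp_all add: a_def)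
    then show False using s eps_pos by simp
  qed
  then have "omega hA a t \<le> omega hA (s_hat t) t"
    using t by (intro omega_mono bounded_weight_hA) simp_all
  moreover have "omega hA a t = t - a"
    using omega_level(1)[of "2 * n" a t] t by (simp add: a_def)
  moreover have "hA t = 1"
    using hA_level[of t] t assms by simp
  ultimately have "K t \<le> 1 / (t - a)"
    using K_above_t_hat[OF assms(1,2)] t by (simp add: frac_le)
  then show "K t \<le> min (r\<^sup>2) (1 / (t - exp (- real (2 * n) - 1)))"
    using K_le_square[of t] t assms by (simp add: a_def)
qed

definition K_majorant :: "real \<Rightarrow> real" where
  "K_majorant t = (if t \<in> {0..t_hat} then r\<^sup>2 * t_hat else 0) +
     (\<Sum>n \<le> nat \<lfloor>ln r / 2\<rfloor>. if t \<in> {exp (- real (2 * n) - 1)..exp (- real (2 * n))}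
        then min (r\<^sup>2) (1 / (t - exp (- real (2 * n) - 1))) else 0)"

lemma K_le_majorant:
  assumes "0 \<le> t" "t \<le> 1"
  shows "K t \<le> K_majorant t"
  using assms
proof (cases rule: K_cases)
  case 1
  have "omega hB 0 t * hA t \<le> t_hat"
    using omega_le_length[OF bounded_weight_hB, of 0 t] 1 assms
      mult_left_le[of "hA t" "omega hB 0 t"] bounded_weightD(2,3)[OF bounded_weight_hA, of t]
      omega_nonneg[OF bounded_weight_hB, of 0 t]
    by linarith
  then have "K t \<le> r\<^sup>2 * t_hat"
    using 1 mult_left_mono[of _ t_hat "r\<^sup>2"] by (simp add: mult.assoc)
  moreover have "0 \<le> (\<Sum>n \<le> nat \<lfloor>ln r / 2\<rfloor>. if t \<in> {exp (- real (2 * n) - 1)..exp (- real (2 * n))}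
      then min (r\<^sup>2) (1 / (t - exp (- real (2 * n) - 1))) else 0)"
    by (intro sum_nonneg) simp
  ultimately show ?thesis using 1 assms by (simp add: K_majorant_def)
next
  case 2
  show ?thesis
  proof (cases "even (level t)")
    case True
    then obtain n where n: "level t = 2 * n" by blast
    note even_level = K_le_on_even_level[OF 2(1,2) n]
    have "K t \<le> (\<Sum>n \<le> nat \<lfloor>ln r / 2\<rfloor>. if t \<in> {exp (- real (2 * n) - 1)..exp (- real (2 * n))}
        then min (r\<^sup>2) (1 / (t - exp (- real (2 * n) - 1))) else 0)"
      using even_level by (intro member_le_sum[of n, THEN order_trans[rotated]]) auto
    moreover have "0 \<le> (if t \<in> {0..t_hat} then r\<^sup>2 * t_hat else 0)" using t_hat_pos by simp
    ultimately show ?thesis unfolding K_majorant_def by linarith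
  next
    case False
    then have "hA t = 0" using hA_level[of t] 2 t_hat_pos by simp
    then have "K t = 0" using 2 by simp
    then show ?thesis by (auto simp: K_majorant_def intro!: sum_nonneg add_nonneg_nonneg)
  qed
next
  case 3
  then show ?thesis by (auto simp: K_majorant_def intro!: sum_nonneg add_nonneg_nonneg)
qed

lemma K_majorant_integral:
  shows "K_majorant integrable_on {0..1}"
    and "integral {0..1} K_majorant \<le> exp 5 + (ln r / 2 + 1) * (1 + 2 * ln r)"
proof -
  define M where "M = nat \<lfloor>ln r / 2\<rfloor>"
  define g where "g n t = (if t \<in> {exp (- real (2 * n) - 1)..exp (- real (2 * n))}
    then min (r\<^sup>2) (1 / (t - exp (- real (2 * n) - 1))) else 0)" for n t
  have "1 \<le> exp (16::real)" by simp
  then have "1 \<le> r" using r_large by linarith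
  then have "1 \<le> r\<^sup>2" by (rule one_le_power)
  have g: "g n integrable_on {0..1}" "integral {0..1} (g n) \<le> 1 + ln (r\<^sup>2)" for n
  proof -
    have ends: "0 \<le> exp (- real (2 * n) - 1)" "exp (- real (2 * n)) \<le> 1" by simp_all
    then have "{exp (- real (2 * n) - 1)..exp (- real (2 * n))} \<subseteq> {0..1}" by auto
    moreover have "exp (- real (2 * n)) \<le> exp (- real (2 * n) - 1) + 1" using ends by linarith
    ultimately show "g n integrable_on {0..1}" "integral {0..1} (g n) \<le> 1 + ln (r\<^sup>2)"
      unfolding g_def by (rule integral_min_inverse_restrict_le[OF \<open>1 \<le> r\<^sup>2\<close>])+
  qed
  have box: "((\<lambda>t. if t \<in> {0..t_hat} then r\<^sup>2 * t_hat else 0) has_integral t_hat * (r\<^sup>2 * t_hat)) {0..1}"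
    using t_hat has_integral_const_real[of "r\<^sup>2 * t_hat" 0 t_hat] by (subst has_integral_restrict) auto
  have "(K_majorant has_integral (t_hat * (r\<^sup>2 * t_hat) + (\<Sum>n \<le> M. integral {0..1} (g n)))) {0..1}"
    unfolding K_majorant_def M_def[symmetric] g_def[symmetric]
    using g by (intro has_integral_add[OF box] has_integral_sum) auto
  then show "K_majorant integrable_on {0..1}" by (rule has_integral_integrable)
  have "(\<Sum>n \<le> M. integral {0..1} (g n)) \<le> (\<Sum>n \<le> M. 1 + 2 * ln r)"
    using g(2) r_pos by (intro sum_mono) (simp add: ln_realpow)
  also have "\<dots> = (real M + 1) * (1 + 2 * ln r)" by simp
  also have "\<dots> \<le> (ln r / 2 + 1) * (1 + 2 * ln r)"
    using ln_r_ge by (intro mult_right_mono) (simp_all add: M_def, linarith)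
  finally have "(\<Sum>n \<le> M. integral {0..1} (g n)) \<le> (ln r / 2 + 1) * (1 + 2 * ln r)" .
  moreover have "t_hat * (r\<^sup>2 * t_hat) \<le> exp 5"
    using t_hat_upper by (simp add: power2_eq_square algebra_simps)
  ultimately show "integral {0..1} K_majorant \<le> exp 5 + (ln r / 2 + 1) * (1 + 2 * ln r)"
    using integral_unique[OF \<open>(K_majorant has_integral _) {0..1}\<close>] by linarith
qed

lemma integral_upper: "integral {0..1} K \<le> 3 * (ln r)\<^sup>2"
proof -
  have "integral {0..1} K \<le> integral {0..1} K_majorant"
    using K_integrable K_majorant_integral(1) K_le_majorant by (intro integral_le) auto
  also have "\<dots> \<le> exp 5 + (ln r / 2 + 1) * (1 + 2 * ln r)"
    by (rule K_majorant_integral(2))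
  also have "\<dots> \<le> 3 * (ln r)\<^sup>2"
  proof -
    have "exp (5::real) = exp 1 ^ 5" by (simp flip: exp_of_nat_mult)
    also have "\<dots> \<le> 3 ^ 5" using exp_le by (intro power_mono) simp_all
    finally have "exp (5::real) \<le> 243" by simp
    moreover have "16 * ln r \<le> ln r * ln r" using ln_r_ge by (intro mult_right_mono) simp_all
    moreover have "(ln r / 2 + 1) * (1 + 2 * ln r) = ln r * ln r + 5 / 2 * ln r + 1"
      by (simp add: algebra_simps)
    ultimately show ?thesis using ln_r_ge unfolding power2_eq_square by linarith
  qed
  finally show ?thesis .
qed

end

theorem proposition7p5:
  shows "\<exists>c1 c2 c3 c4 R. 0 < c1 \<and> 0 < c2 \<and> 0 < c3 \<and> 0 < c4 \<and>
    (\<forall>r. r > rzero hA hB hC \<and> r \<ge> R \<longrightarrow>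
        c1 * ln r \<le> real (kappa hA hB hC r) \<and> real (kappa hA hB hC r) \<le> c2 * ln r \<and>
        c3 * (ln r)\<^sup>2 \<le> integral {0..1} (\<lambda>t. KH hA hB hC t r) \<and>
        integral {0..1} (\<lambda>t. KH hA hB hC t r) \<le> c4 * (ln r)\<^sup>2)"
proof -
  have "1 / 4 * ln r \<le> real (kappa hA hB hC r) \<and> real (kappa hA hB hC r) \<le> 2 * ln r \<and>
      1 / 8 * (ln r)\<^sup>2 \<le> integral {0..1} (\<lambda>t. KH hA hB hC t r) \<and>
      integral {0..1} (\<lambda>t. KH hA hB hC t r) \<le> 3 * (ln r)\<^sup>2" if "exp 16 \<le> r" for r
  proof -
    interpret alternating_scale r using that by unfold_locales
    show ?thesis using kappa_lower kappa_upper integral_lower integral_upper by simp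
  qed
  then show ?thesis
    by (intro exI[of _ "1 / 4"] exI[of _ 2] exI[of _ "1 / 8"] exI[of _ 3] exI[of _ "exp 16"]) simp
qed

end
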